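(* Let $\mathscr{U}$ be a bounded monomial polyhedron represented by $B\in M_n(\mathbb{Z})$ with $\det B>0$ and $B^{-1}\succeq0$, and let $A=\operatorname{adj}B$ with columns $a_1,\dots,a_n$. Let $\mathscr{S}_2(\mathscr{U})=\{\beta\in(\mathbb{Z}^n)^\dagger: z^\beta\in L^2(\mathscr{U})\}$. Then: (1) $\beta\in\mathscr{S}_2(\mathscr{U})$ if and only if $(\beta+\mathbb{1})A\succeq g(A)$; (2) for each $1\le j\le n$, the set $\Pi_j=\{\beta\in(\mathbb{Z}^n)^\dagger: (\beta+\mathbb{1})a_j=\gcd(a_j)\}$ satisfies $\Pi_j\cap\mathscr{S}_2(\mathscr{U})\neq\emptyset$.
   Context: A monomial polyhedron defined by $B$ with rows $b^j$ is $\{z\in\mathbb{C}^n:\prod_k|z_k|^{b^j_k}<1\ \forall j\}$, excluding points where a product is undefined due to division by zero. $\mathbb{1}=(1,\dots,1)$ row vector; $\succeq$ is entrywise order. $\gcd(a_j)$ is the greatest common divisor of the entries of column $a_j$ (columns of $A$ are nonzero), and $g(A)=(\gcd(a_1),\dots,\gcd(a_n))\in(\mathbb{Z}^n)^\dagger$. $(\beta+\mathbb{1})a_j=\sum_k(\beta_k+1)a^k_j$. *)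

theory Defs
  imports "HOL-Analysis.Analysis"
begin

text \<open>Integer matrices are int^'n^'n, rows indexed first: B $ j $ k is the entry in row j,
  column k; the row b^j is B $ j.  Row vectors beta are int^'n.\<close>

text \<open>Adjugate (classical adjoint): adj B = transpose of the cofactor matrix, where the
  (j,i) cofactor equals det of B with row j replaced by the i-th standard unit vector.\<close>
definition adjugate :: "'a::comm_ring_1^'n^'n \<Rightarrow> 'a^'n^'n" where
  "adjugate B = (\<chi> i j. det (\<chi> r. if r = j then axis i 1 else B $ r))"

definition real_mat :: "int^'n^'m \<Rightarrow> real^'n^'m" where
  "real_mat B = (\<chi> i j. real_of_int (B $ i $ j))"

text \<open>Monomial polyhedron defined by B (points where some product is undefined because
  of division by zero are excluded).\<close>
definition monomial_polyhedron :: "int^'n^'n \<Rightarrow> (complex^'n) set" where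
  "monomial_polyhedron B =
     {z. (\<forall>j k. B $ j $ k < 0 \<longrightarrow> z $ k \<noteq> 0) \<and>
         (\<forall>j. (\<Prod>k\<in>UNIV. cmod (z $ k) powi (B $ j $ k)) < 1)}"

definition monomial :: "int^'n \<Rightarrow> complex^'n \<Rightarrow> complex" where
  "monomial \<beta> z = (\<Prod>k\<in>UNIV. (z $ k) powi (\<beta> $ k))"

definition S2 :: "(complex^'n) set \<Rightarrow> (int^'n) set" where
  "S2 U = {\<beta>. monomial \<beta> \<in> borel_measurable (lebesgue_on U) \<and>
              (\<integral>\<^sup>+ z. ennreal ((cmod (monomial \<beta> z))\<^sup>2) \<partial>(lebesgue_on U)) < \<infinity>}"

definition shifted_col :: "int^'n \<Rightarrow> int^'n^'n \<Rightarrow> 'n \<Rightarrow> int" where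
  "shifted_col \<beta> A j = (\<Sum>k\<in>UNIV. (\<beta> $ k + 1) * A $ k $ j)"

definition col_gcd :: "int^'n^'n \<Rightarrow> 'n \<Rightarrow> int" where
  "col_gcd A j = Gcd (range (\<lambda>k. A $ k $ j))"

end

theory Submission
  imports Defs
begin

text \<open>
  Cut the torus part of $\mathbb{C}^n$ into the dyadic shells
  $2^{-m_k-1} < |z_k| \le 2^{-m_k}$, $m \in \mathbb{Z}^n$. On the shell of $m$ the value
  $|z^\beta|^2$ is $2^{-2\beta m}$ and the volume is $2^{-2 \sum_k m_k}$, both up to constants
  depending only on $\beta$ and $n$; moreover the shells meeting $\mathscr{U}$ satisfy
  $Bm > -R$ and those with $Bm > R$ lie inside $\mathscr{U}$, where $R_j = \sum_k |b^j_k|$. Hence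
  $z^\beta \in L^2(\mathscr{U})$ iff the lattice sum of $2^{-2\gamma m}$, $\gamma = \beta + \mathbb{1}$,
  over such a translated cone is finite. In the coordinates $y = Bm$ we have
  $(\det B)\, \gamma m = \sum_j (\gamma a_j)\, y_j$, so the sum is a product of one-sided geometric
  series and converges iff $(\beta + \mathbb{1}) a_j > 0$ for all $j$. As $\gcd(a_j)$ divides
  $(\beta + \mathbb{1}) a_j$, this is condition (1); for (2), a B\'ezout combination realising
  $\gcd(a_j)$ is corrected by a row combination of $B$.
\<close>

section \<open>The adjugate\<close>

lemma matrix_mult_adjugate:
  fixes B :: "'a::comm_ring_1^'n^'n"
  shows "B ** adjugate B = mat (det B)"
proof -
  have "(\<Sum>j\<in>UNIV. B$k$j * adjugate B $ j $ r) = (if k = r then det B else 0)" for k r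
  proof -
    have "(\<Sum>j\<in>UNIV. B$k$j * adjugate B $ j $ r)
        = (\<Sum>j\<in>UNIV. det (\<chi> s. if s = r then B$k$j *s axis j 1 else B$s))"
      unfolding adjugate_def by (simp add: det_row_mul)
    also have "\<dots> = det (\<chi> s. if s = r then (\<Sum>j\<in>UNIV. B$k$j *s axis j 1) else B$s)"
      by (rule det_linear_row_sum[symmetric]) simp
    also have "(\<Sum>j\<in>UNIV. B$k$j *s axis j 1) = B$k"
      by (simp add: vec_eq_iff sum.delta axis_def if_distrib cong: if_cong)
    also have "det (\<chi> s. if s = r then B$k else B$s) = (if k = r then det B else 0)"
    proof (cases "k = r")
      case True
      then have "(\<chi> s. if s = r then B$k else B$s) = B" by (simp add: vec_eq_iff)
      then show ?thesis using True by simp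
    next
      case False
      show ?thesis using False
        by (intro trans[OF det_identical_rows[of r k]]) (auto simp: row_def vec_eq_iff)
    qed
    finally show ?thesis .
  qed
  then show ?thesis by (simp add: vec_eq_iff matrix_matrix_mult_def mat_def)
qed

text \<open>The other product is read off from the inverse over the reals.\<close>
lemma adjugate_mult_matrix:
  fixes B :: "int^'n^'n"
  assumes "det B \<noteq> 0"
  shows "adjugate B ** B = mat (det B)"
proof -
  define Ar where "Ar = (1 / real_of_int (det B)) *\<^sub>R real_mat (adjugate B)"
  have of_int_mult: "real_mat (X ** Y) = real_mat X ** real_mat Y" for X Y :: "int^'n^'n"
    by (simp add: vec_eq_iff real_mat_def matrix_matrix_mult_def)
  have "real_mat B ** Ar = (1 / real_of_int (det B)) *\<^sub>R real_mat (B ** adjugate B)"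
    by (simp add: Ar_def matrix_scalar_ac scalar_matrix_assoc[symmetric] of_int_mult)
  also have "\<dots> = mat 1"
    using assms by (simp add: matrix_mult_adjugate vec_eq_iff real_mat_def mat_def)
  finally have "Ar ** real_mat B = mat 1" by (simp add: matrix_left_right_inverse)
  moreover have "Ar ** real_mat B = (1 / real_of_int (det B)) *\<^sub>R real_mat (adjugate B ** B)"
    by (simp add: Ar_def scalar_matrix_assoc[symmetric] of_int_mult)
  ultimately have "real_of_int (det B) *\<^sub>R ((1 / real_of_int (det B)) *\<^sub>R real_mat (adjugate B ** B))
      = real_of_int (det B) *\<^sub>R mat 1"
    by simp
  then have "real_mat (adjugate B ** B) = real_of_int (det B) *\<^sub>R mat 1"
    using assms by simp
  then have "real_mat (adjugate B ** B) = real_mat (mat (det B))"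
    by (simp add: vec_eq_iff real_mat_def mat_def)
  then show ?thesis by (simp add: vec_eq_iff real_mat_def)
qed

lemma mat_mult_vector [simp]: "mat c *v x = c *s (x::'a::semiring_1^'n)"
  by (simp add: vec_eq_iff matrix_vector_mult_def mat_def if_distrib if_distribR cong: if_cong)

lemma vector_matrix_mult_mat [simp]: "x v* mat c = c *s (x::'a::comm_semiring_1^'n)"
  by (simp add: vec_eq_iff vector_matrix_mult_def mat_def if_distrib if_distribR mult.commute
      cong: if_cong)

lemma sum_vector_matrix_mult_mult:
  fixes x y :: "'a::comm_semiring_1^'n"
  shows "(\<Sum>j\<in>UNIV. (x v* A) $ j * y $ j) = (\<Sum>i\<in>UNIV. x $ i * (A *v y) $ i)"
  by (simp add: vector_matrix_mult_def matrix_vector_mult_def sum_distrib_left sum_distrib_right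
      mult_ac) (rule sum.swap)

lemma shifted_col_eq: "shifted_col \<beta> A j = ((\<beta> + 1) v* A) $ j"
  by (simp add: shifted_col_def vector_matrix_mult_def)

lemma inj_matrix_vector_mult_int:
  fixes B :: "int^'n^'n"
  assumes "det B \<noteq> 0"
  shows "inj ((*v) B)"
proof (rule injI)
  fix x y assume "B *v x = B *v y"
  then have "det B *s x = det B *s y"
    using adjugate_mult_matrix[OF assms] by (metis mat_mult_vector matrix_vector_mul_assoc)
  then show "x = y" using assms by (simp add: vec_eq_iff)
qed

lemma det_mult_sum_eq_adjugate_weights:
  fixes B :: "int^'n^'n"
  assumes "det B \<noteq> 0"
  shows "det B * (\<Sum>k\<in>UNIV. \<gamma> $ k * m $ k)
       = (\<Sum>j\<in>UNIV. (\<gamma> v* adjugate B) $ j * (B *v m) $ j)"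
  unfolding sum_vector_matrix_mult_mult matrix_vector_mul_assoc adjugate_mult_matrix[OF assms]
  by (simp add: sum_distrib_left mult_ac)

section \<open>Column gcds of the adjugate\<close>

lemma Gcd_image_bezout:
  fixes f :: "'a \<Rightarrow> int"
  assumes "finite S"
  shows "\<exists>c. (\<Sum>k\<in>S. c k * f k) = Gcd (f ` S)"
  using assms
proof (induction S rule: finite_induct)
  case (insert a S)
  then obtain c where c: "(\<Sum>k\<in>S. c k * f k) = Gcd (f ` S)" by blast
  obtain u v where uv: "u * f a + v * Gcd (f ` S) = gcd (f a) (Gcd (f ` S))"
    using bezout_int by blast
  define c' where "c' = (\<lambda>k. v * c k)(a := u)"
  have "(\<Sum>k\<in>insert a S. c' k * f k) = u * f a + (\<Sum>k\<in>S. v * c k * f k)"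
    using insert.hyps by (simp add: c'_def) (intro sum.cong, auto)
  also have "(\<Sum>k\<in>S. v * c k * f k) = v * Gcd (f ` S)"
    by (simp add: c[symmetric] sum_distrib_left mult.assoc)
  finally show ?case using uv by auto
qed simp

lemma col_gcd_adjugate_pos:
  fixes B :: "int^'n^'n"
  assumes "det B \<noteq> 0"
  shows "0 < col_gcd (adjugate B) j"
proof -
  have "(B ** adjugate B) $ j $ j \<noteq> 0"
    using assms by (simp add: matrix_mult_adjugate mat_def)
  then obtain k where "adjugate B $ k $ j \<noteq> 0"
    by (force simp: matrix_matrix_mult_def intro: sum.neutral)
  then have "col_gcd (adjugate B) j \<noteq> 0" by (auto simp: col_gcd_def Gcd_0_iff)
  then show ?thesis by (simp add: col_gcd_def order_le_neq_trans)
qed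

lemma col_gcd_dvd_shifted_col: "col_gcd A j dvd shifted_col \<beta> A j"
  unfolding shifted_col_def col_gcd_def by (intro dvd_sum dvd_mult) (auto intro: Gcd_dvd)

lemma col_gcd_le_shifted_col_iff:
  assumes "0 < col_gcd A j"
  shows "col_gcd A j \<le> shifted_col \<beta> A j \<longleftrightarrow> 0 < shifted_col \<beta> A j"
  using assms col_gcd_dvd_shifted_col[of A j \<beta>] zdvd_imp_le by fastforce

text \<open>Start from a B\'ezout combination $c$ realising $\gcd(a_j)$ in column $j$ and add
  $u B$ for an integer row vector $u$ vanishing at $j$: this adds $(\det B)\, u$ to $cA$, so all
  other columns can be made positive without changing column $j$.\<close>
lemma exists_shifted_col_eq_col_gcd:
  fixes B :: "int^'n^'n"
  assumes "det B > 0"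
  shows "\<exists>\<beta>. shifted_col \<beta> (adjugate B) j = col_gcd (adjugate B) j
              \<and> (\<forall>k. 0 < shifted_col \<beta> (adjugate B) k)"
proof -
  let ?A = "adjugate B"
  obtain c where c: "(\<Sum>k\<in>UNIV. c k * ?A $ k $ j) = col_gcd ?A j"
    using Gcd_image_bezout[of UNIV "\<lambda>k. ?A $ k $ j"] by (auto simp: col_gcd_def)
  define cv where "cv = (\<chi> k. c k)"
  define N where "N = (\<Sum>k\<in>UNIV. \<bar>(cv v* ?A) $ k\<bar>) + 1"
  define u :: "int^'n" where "u = (\<chi> r. if r = j then 0 else N)"
  define \<beta> where "\<beta> = cv + u v* B - 1"
  have "(\<beta> + 1) v* ?A = cv v* ?A + u v* (B ** ?A)"
    by (simp add: \<beta>_def vector_matrix_left_distrib vector_matrix_mul_assoc)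
  then have sc: "shifted_col \<beta> ?A k = (cv v* ?A) $ k + det B * u $ k" for k
    by (simp add: shifted_col_eq matrix_mult_adjugate)
  have gcd: "(cv v* ?A) $ j = col_gcd ?A j"
    using c by (simp add: cv_def vector_matrix_mult_def)
  have "0 < shifted_col \<beta> ?A k" for k
  proof (cases "k = j")
    case True
    then show ?thesis
      using sc[of j] gcd col_gcd_adjugate_pos[of B j] assms by (simp add: u_def)
  next
    case False
    have "\<bar>(cv v* ?A) $ k\<bar> < N"
      unfolding N_def using member_le_sum[of k UNIV "\<lambda>k. \<bar>(cv v* ?A) $ k\<bar>"] by simp
    moreover have "N \<le> det B * N"
      using mult_right_mono[of 1 "det B" N] assms \<open>\<bar>(cv v* ?A) $ k\<bar> < N\<close> by linarith
    ultimately show ?thesis using sc[of k] False by (simp add: u_def)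
  qed
  then show ?thesis using sc[of j] gcd by (auto simp: u_def)
qed

section \<open>Lattice sums\<close>

lemma nn_integral_count_space_inj_le:
  assumes "inj g"
  shows "(\<integral>\<^sup>+x. f (g x) \<partial>count_space UNIV) \<le> (\<integral>\<^sup>+y. f y \<partial>count_space UNIV)"
proof -
  have "(\<integral>\<^sup>+x. f (g x) \<partial>count_space UNIV) = (\<integral>\<^sup>+y. f y \<partial>count_space (range g))"
    using assms by (intro nn_integral_bij_count_space) (simp add: bij_betw_def)
  also have "\<dots> = (\<integral>\<^sup>+y. f y * indicator (range g) y \<partial>count_space UNIV)"
    by (rule nn_integral_count_space_indicator) simp
  also have "\<dots> \<le> (\<integral>\<^sup>+y. f y \<partial>count_space UNIV)"
    by (intro nn_integral_mono) (auto split: split_indicator)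
  finally show ?thesis .
qed

lemma nn_integral_count_space_vec_prod:
  fixes f :: "'n::finite \<Rightarrow> 'a::countable \<Rightarrow> ennreal"
  shows "(\<integral>\<^sup>+y. (\<Prod>j\<in>UNIV. f j (y $ j)) \<partial>count_space (UNIV :: ('a^'n) set))
       = (\<Prod>j\<in>UNIV. \<integral>\<^sup>+t. f j t \<partial>count_space UNIV)"
proof -
  interpret product_sigma_finite "\<lambda>_::'n. count_space (UNIV :: 'a set)"
    by (intro product_sigma_finite.intro sigma_finite_measure_count_space_countable) simp
  have "bij_betw vec_lambda (PiE UNIV (\<lambda>_. UNIV)) (UNIV :: ('a^'n) set)"
    by (intro bij_betwI[of _ _ _ vec_nth]) auto
  then have "(\<integral>\<^sup>+y. (\<Prod>j\<in>UNIV. f j (y $ j)) \<partial>count_space (UNIV :: ('a^'n) set))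
      = (\<integral>\<^sup>+x. (\<Prod>j\<in>UNIV. f j (x j)) \<partial>count_space (PiE UNIV (\<lambda>_. UNIV)))"
    by (subst nn_integral_bij_count_space[symmetric]) (auto simp: vec_lambda_inverse)
  also have "\<dots> = (\<integral>\<^sup>+x. (\<Prod>j\<in>UNIV. f j (x j)) \<partial>PiM UNIV (\<lambda>_. count_space UNIV))"
    by (subst count_space_PiM_finite) auto
  also have "\<dots> = (\<Prod>j\<in>UNIV. \<integral>\<^sup>+t. f j t \<partial>count_space UNIV)"
    by (rule product_nn_integral_prod) auto
  finally show ?thesis .
qed

lemma nn_integral_count_space_eq_top:
  fixes g :: "nat \<Rightarrow> 'a"
  assumes "inj g" and "0 < c" and "\<And>t. c \<le> f (g t)"
  shows "(\<integral>\<^sup>+x. f x \<partial>count_space UNIV) = \<infinity>"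
proof -
  have "infinite (range g)" using assms(1) by (rule range_inj_infinite)
  then have "\<infinity> = c * emeasure (count_space UNIV) (range g)"
    using assms(2) by (simp add: ennreal_mult_top)
  also have "\<dots> = (\<integral>\<^sup>+x. c * indicator (range g) x \<partial>count_space UNIV)"
    by (rule nn_integral_cmult_indicator[symmetric]) simp
  also have "\<dots> \<le> (\<integral>\<^sup>+x. f x \<partial>count_space UNIV)"
    using assms(3) by (intro nn_integral_mono) (auto split: split_indicator)
  finally show ?thesis by (simp add: top_unique)
qed

lemma nn_integral_geometric_tail_finite:
  fixes a :: real and c :: int
  assumes "0 < a"
  shows "(\<integral>\<^sup>+t. ennreal (2 powr (- a * t)) * indicator {c<..} t \<partial>count_space UNIV) < \<infinity>"
proof -
  have bij: "bij_betw (\<lambda>n::nat. c + 1 + int n) UNIV {c<..}"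
    by (rule bij_betwI[where g = "\<lambda>t. nat (t - c - 1)"]) auto
  have q: "\<bar>2 powr (- a)\<bar> < (1::real)" using assms by (simp add: powr_less_one)
  have geom: "2 powr (- a * real_of_int (c + 1 + int n)) = 2 powr (- a * (c + 1)) * (2 powr (- a)) ^ n"
    for n
    by (simp add: powr_realpow[symmetric] powr_powr powr_add[symmetric] algebra_simps)
  have "(\<integral>\<^sup>+t. ennreal (2 powr (- a * t)) * indicator {c<..} t \<partial>count_space UNIV)
      = (\<integral>\<^sup>+t. ennreal (2 powr (- a * t)) \<partial>count_space {c<..})"
    by (rule nn_integral_count_space_indicator[symmetric]) simp
  also have "\<dots> = (\<integral>\<^sup>+n. ennreal (2 powr (- a * real_of_int (c + 1 + int n))) \<partial>count_space UNIV)"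
    by (rule nn_integral_bij_count_space[OF bij, symmetric])
  also have "\<dots> = (\<Sum>n. ennreal (2 powr (- a * (c + 1)) * (2 powr (- a)) ^ n))"
    by (simp only: nn_integral_count_space_nat geom)
  also have "\<dots> < \<infinity>"
    using q by (simp add: less_top[symmetric] ennreal_suminf_neq_top summable_mult summable_geometric)
  finally show ?thesis .
qed

text \<open>Substituting $y = Bm$ turns the weight $2^{-2 \gamma m}$ into the product
  $\prod_j 2^{-2 w_j y_j / \det B}$ of geometric weights, $w = \gamma \operatorname{adj} B$.\<close>
lemma lattice_sum_finite:
  fixes B :: "int^'n^'n" and \<gamma> :: "int^'n" and T :: "'n \<Rightarrow> int"
  assumes "det B > 0" and "\<forall>j. 0 < (\<gamma> v* adjugate B) $ j"
  shows "(\<integral>\<^sup>+m\<in>{m. \<forall>j. T j < (B *v m) $ j}.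
            ennreal (2 powr (- 2 * real_of_int (\<Sum>k\<in>UNIV. \<gamma> $ k * m $ k))) \<partial>count_space UNIV) < \<infinity>"
proof -
  define d where "d = real_of_int (det B)"
  define w where "w j = real_of_int ((\<gamma> v* adjugate B) $ j)" for j
  define h where "h j t = ennreal (2 powr (- (2 * w j / d) * t)) * indicator {T j<..} t"
    for j and t :: int
  have "ennreal (2 powr (- 2 * real_of_int (\<Sum>k\<in>UNIV. \<gamma> $ k * m $ k)))
          * indicator {m. \<forall>j. T j < (B *v m) $ j} m
        = (\<Prod>j\<in>UNIV. h j ((B *v m) $ j))" for m
  proof -
    have "d * real_of_int (\<Sum>k\<in>UNIV. \<gamma> $ k * m $ k)
        = real_of_int (\<Sum>j\<in>UNIV. (\<gamma> v* adjugate B) $ j * (B *v m) $ j)"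
      using assms(1)
      by (simp only: d_def of_int_mult[symmetric] det_mult_sum_eq_adjugate_weights less_irrefl)
    then have "real_of_int (\<Sum>k\<in>UNIV. \<gamma> $ k * m $ k) = (\<Sum>j\<in>UNIV. w j * (B *v m) $ j) / d"
      using assms(1) by (simp add: d_def w_def field_simps)
    then have exponent: "- 2 * real_of_int (\<Sum>k\<in>UNIV. \<gamma> $ k * m $ k)
        = (\<Sum>j\<in>UNIV. - (2 * w j / d) * (B *v m) $ j)"
      by (simp add: sum_divide_distrib sum_distrib_left field_simps)
    have indicator: "indicator {m. \<forall>j. T j < (B *v m) $ j} m
        = (\<Prod>j\<in>UNIV. indicator {T j<..} ((B *v m) $ j) :: ennreal)"
      by (cases "\<forall>j. T j < (B *v m) $ j") (auto simp: indicator_def)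
    show ?thesis
      unfolding h_def prod.distrib indicator exponent
      by (simp add: prod_ennreal powr_sum)
  qed
  then have "(\<integral>\<^sup>+m\<in>{m. \<forall>j. T j < (B *v m) $ j}.
            ennreal (2 powr (- 2 * real_of_int (\<Sum>k\<in>UNIV. \<gamma> $ k * m $ k))) \<partial>count_space UNIV)
      = (\<integral>\<^sup>+m. (\<lambda>y. \<Prod>j\<in>UNIV. h j (y $ j)) (B *v m) \<partial>count_space UNIV)"
    by simp
  also have "\<dots> \<le> (\<integral>\<^sup>+y. (\<Prod>j\<in>UNIV. h j (y $ j)) \<partial>count_space UNIV)"
    using assms(1) by (intro nn_integral_count_space_inj_le inj_matrix_vector_mult_int) simp
  also have "\<dots> = (\<Prod>j\<in>UNIV. \<integral>\<^sup>+t. h j t \<partial>count_space UNIV)"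
    by (rule nn_integral_count_space_vec_prod)
  also have "\<dots> < \<infinity>"
  proof -
    have "(\<integral>\<^sup>+t. h j t \<partial>count_space UNIV) < \<infinity>" for j
      unfolding h_def using assms by (intro nn_integral_geometric_tail_finite) (simp add: d_def w_def)
    then show ?thesis by (auto simp: less_top[symmetric] ennreal_prod_eq_top)
  qed
  finally show ?thesis .
qed

text \<open>If $w_j \le 0$, the lattice points $m_t = \operatorname{adj}B\,(S\mathbb{1} + t e_j)$,
  $t \in \mathbb{N}$, all lie in the region and have bounded exponent $\gamma m_t = w (S\mathbb{1} + t e_j)$.\<close>
lemma lattice_sum_infinite:
  fixes B :: "int^'n^'n" and \<gamma> :: "int^'n" and T :: "'n \<Rightarrow> int"
  assumes "det B > 0" and "(\<gamma> v* adjugate B) $ j \<le> 0"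
  shows "(\<integral>\<^sup>+m\<in>{m. \<forall>j. T j < (B *v m) $ j}.
            ennreal (2 powr (- 2 * real_of_int (\<Sum>k\<in>UNIV. \<gamma> $ k * m $ k))) \<partial>count_space UNIV) = \<infinity>"
proof -
  let ?A = "adjugate B"
  define S where "S = (\<Sum>i\<in>UNIV. \<bar>T i\<bar>) + 1"
  define v :: "nat \<Rightarrow> int^'n" where "v t = (\<chi> i. S + (if i = j then int t else 0))" for t
  define m where "m t = ?A *v v t" for t
  define K where "K = S * (\<Sum>i\<in>UNIV. (\<gamma> v* ?A) $ i)"
  have Bm: "B *v m t = det B *s v t" for t
    by (simp add: m_def matrix_vector_mul_assoc matrix_mult_adjugate)
  have "T i < (B *v m t) $ i" for t i
  proof -
    have "T i < S" unfolding S_def using member_le_sum[of i UNIV "\<lambda>i. \<bar>T i\<bar>"] by simp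
    also have "S \<le> v t $ i" by (simp add: v_def)
    also have "\<dots> \<le> det B * v t $ i"
    proof -
      have "0 \<le> S" unfolding S_def by (simp add: sum_nonneg add_nonneg_nonneg)
      then have "0 \<le> v t $ i" using \<open>S \<le> v t $ i\<close> by linarith
      then show ?thesis using assms(1) mult_right_mono[of 1 "det B" "v t $ i"] by simp
    qed
    finally show ?thesis by (simp add: Bm)
  qed
  then have region: "m t \<in> {m. \<forall>j. T j < (B *v m) $ j}" for t by simp
  have exponent: "(\<Sum>k\<in>UNIV. \<gamma> $ k * m t $ k) \<le> K" for t
  proof -
    have "(\<Sum>k\<in>UNIV. \<gamma> $ k * m t $ k) = (\<Sum>i\<in>UNIV. (\<gamma> v* ?A) $ i * v t $ i)"
      by (simp add: m_def sum_vector_matrix_mult_mult)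
    also have "\<dots> = (\<Sum>i\<in>UNIV. (\<gamma> v* ?A) $ i * S)
        + (\<Sum>i\<in>UNIV. (\<gamma> v* ?A) $ i * (if i = j then int t else 0))"
      by (simp add: v_def distrib_left sum.distrib)
    also have "\<dots> = K + (\<gamma> v* ?A) $ j * int t"
      by (simp add: K_def sum_distrib_left mult.commute if_distrib[of "\<lambda>x. _ * x"] cong: if_cong)
    also have "\<dots> \<le> K" using assms(2) by (simp add: mult_nonpos_nonneg)
    finally show ?thesis .
  qed
  have "inj m"
  proof (rule injI)
    fix t t' assume "m t = m t'"
    then have "det B *s v t = det B *s v t'" by (metis Bm)
    then have "(det B *s v t) $ j = (det B *s v t') $ j" by simp
    then show "t = t'" using assms(1) by (simp add: v_def)
  qed
  show ?thesis
  proof (rule nn_integral_count_space_eq_top[OF \<open>inj m\<close>])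
    show "0 < ennreal (2 powr (- 2 * real_of_int K))" by simp
    fix t
    have "real_of_int (\<Sum>k\<in>UNIV. \<gamma> $ k * m t $ k) \<le> real_of_int K"
      using exponent[of t] by (simp only: of_int_le_iff)
    then show "ennreal (2 powr (- 2 * real_of_int K))
        \<le> ennreal (2 powr (- 2 * real_of_int (\<Sum>k\<in>UNIV. \<gamma> $ k * m t $ k)))
          * indicator {m. \<forall>j. T j < (B *v m) $ j} (m t)"
      using region by (auto intro!: ennreal_leI)
  qed
qed

section \<open>Integration on $\mathbb{C}^n$\<close>

lemma nn_integral_disjoint_family_count_space:
  fixes P :: "'i::countable \<Rightarrow> 'a set"
  assumes "disjoint_family P" and "\<And>i. P i \<in> sets M" and "f \<in> borel_measurable M"
  shows "(\<integral>\<^sup>+i. (\<integral>\<^sup>+x\<in>P i. f x \<partial>M) \<partial>count_space UNIV) = (\<integral>\<^sup>+x\<in>(\<Union>i. P i). f x \<partial>M)"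
proof -
  have "(\<integral>\<^sup>+i. f x * indicator (P i) x \<partial>count_space UNIV) = f x * indicator (\<Union>i. P i) x" for x
  proof (cases "x \<in> (\<Union>i. P i)")
    case True
    then obtain i where "x \<in> P i" by blast
    then have "f x * indicator (P i') x = f x * indicator {i} i'" for i'
      using assms(1) by (auto simp: disjoint_family_on_def split: split_indicator)
    then show ?thesis using True by (simp add: nn_integral_cmult_indicator)
  qed simp
  then show ?thesis
    using assms(2,3) by (subst nn_integral_count_space_nn_integral[symmetric]) auto
qed

lemma borel_measurable_powi [measurable]:
  "(\<lambda>x::'a::real_normed_field. x powi n) \<in> borel_measurable borel"
proof -
  have "(\<lambda>x::'a. x powi n) = (\<lambda>x. if 0 \<le> n then x ^ nat n else inverse x ^ nat (- n))"
    by (auto simp: power_int_def fun_eq_iff)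
  also have "\<dots> \<in> borel_measurable borel" by measurable
  finally show ?thesis .
qed

lemma borel_measurable_vec_nth [measurable]:
  "(\<lambda>z::'a::euclidean_space^'n. z $ k) \<in> borel_measurable borel"
  by (intro borel_measurable_continuous_onI continuous_intros)

lemma borel_measurable_monomial [measurable]: "monomial \<beta> \<in> borel_measurable borel"
  unfolding monomial_def by measurable

lemma monomial_polyhedron_borel [measurable]: "monomial_polyhedron B \<in> sets borel"
proof -
  have "monomial_polyhedron B = (\<Inter>j. \<Inter>k. {z. B $ j $ k < 0 \<longrightarrow> z $ k \<noteq> 0}) \<inter>
          (\<Inter>j. {z. (\<Prod>k\<in>UNIV. cmod (z $ k) powi (B $ j $ k)) < 1})"
    unfolding monomial_polyhedron_def by auto
  also have "\<dots> \<in> sets borel" by measurable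
  finally show ?thesis .
qed

lemma AE_vec_nth_nonzero: "AE z in lborel. \<forall>k. (z::'a::euclidean_space^'n) $ k \<noteq> 0"
proof -
  have "{z::'a^'n. z $ k = 0} \<in> null_sets lborel" for k
  proof -
    obtain b :: 'a where b: "b \<in> Basis" using nonempty_Basis by blast
    have "{z::'a^'n. z $ k = 0} \<subseteq> {z. axis k b \<bullet> z = 0}"
      by (auto simp: inner_axis')
    moreover have "negligible {z::'a^'n. axis k b \<bullet> z = 0}"
      using b by (intro negligible_hyperplane) (auto simp: axis_eq_0_iff)
    ultimately have "{z::'a^'n. z $ k = 0} \<in> null_sets lebesgue"
      using negligible_subset negligible_iff_null_sets by blast
    moreover have "{z::'a^'n. z $ k = 0} \<in> sets lborel" by measurable
    ultimately show ?thesis using null_sets_completion_iff by blast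
  qed
  then have "(\<Union>k. {z::'a^'n. z $ k = 0}) \<in> null_sets lborel" by (intro null_sets_UN') auto
  then show ?thesis by (rule AE_I') auto
qed

lemma norm_monomial_sq:
  assumes "\<forall>k. z $ k \<noteq> 0"
  shows "(cmod (monomial \<beta> z))\<^sup>2 = (\<Prod>k\<in>UNIV. cmod (z $ k) powr (2 * real_of_int (\<beta> $ k)))"
proof -
  have "cmod (monomial \<beta> z) = (\<Prod>k\<in>UNIV. cmod (z $ k) powr (\<beta> $ k))"
    using assms unfolding monomial_def
    by (simp add: prod_norm[symmetric] norm_power_int powr_real_of_int')
  then have "(cmod (monomial \<beta> z))\<^sup>2 = (\<Prod>k\<in>UNIV. (cmod (z $ k) powr (\<beta> $ k))\<^sup>2)"
    by (simp add: prod_power_distrib)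
  also have "\<dots> = (\<Prod>k\<in>UNIV. cmod (z $ k) powr (2 * real_of_int (\<beta> $ k)))"
    by (intro prod.cong refl) (simp only: mult_2 powr_add power2_eq_square)
  finally show ?thesis .
qed

lemma mem_monomial_polyhedron_iff:
  assumes "\<forall>k. z $ k \<noteq> 0"
  shows "z \<in> monomial_polyhedron B \<longleftrightarrow> (\<forall>j. (\<Prod>k\<in>UNIV. cmod (z $ k) powr (B $ j $ k)) < 1)"
  using assms unfolding monomial_polyhedron_def by (simp add: powr_real_of_int')

lemma mem_cbox_complex_vec:
  "(x::complex^'n) \<in> cbox a b \<longleftrightarrow>
     (\<forall>i. Re (a $ i) \<le> Re (x $ i) \<and> Re (x $ i) \<le> Re (b $ i) \<and> Im (a $ i) \<le> Im (x $ i) \<and> Im (x $ i) \<le> Im (b $ i))"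
  by (auto simp: mem_box Basis_vec_def inner_axis Basis_complex_def)

lemma prod_Basis_complex_vec:
  "(\<Prod>b\<in>(Basis::(complex^'n) set). f b) = (\<Prod>i\<in>UNIV. f (axis i 1) * f (axis i \<i>))"
proof -
  have B: "(Basis::(complex^'n) set) = (\<lambda>(i, u). axis i u) ` (UNIV \<times> Basis)"
    by (auto simp: Basis_vec_def)
  have inj: "inj_on (\<lambda>(i, u). axis i u :: complex^'n) (UNIV \<times> Basis)"
    by (auto simp: inj_on_def axis_eq_axis Basis_complex_def)
  have "(\<Prod>b\<in>(Basis::(complex^'n) set). f b) = (\<Prod>(i, u)\<in>UNIV \<times> Basis. f (axis i u))"
    unfolding B by (subst prod.reindex[OF inj]) (simp add: case_prod_unfold)
  then show ?thesis by (simp add: prod.cartesian_product[symmetric] Basis_complex_def)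
qed

lemma emeasure_cbox_complex_vec:
  assumes "\<forall>i. Re (a $ i) \<le> Re (b $ i) \<and> Im (a $ i) \<le> Im (b $ i)"
  shows "emeasure lborel (cbox a (b::complex^'n))
       = ennreal (\<Prod>i\<in>UNIV. (Re (b $ i) - Re (a $ i)) * (Im (b $ i) - Im (a $ i)))"
proof -
  have "\<forall>u\<in>Basis. a \<bullet> u \<le> b \<bullet> u"
    using assms by (auto simp: Basis_vec_def inner_axis Basis_complex_def)
  then show ?thesis by (simp add: emeasure_lborel_cbox_eq prod_Basis_complex_vec inner_axis)
qed

lemma powr_bounds_half_interval:
  fixes r x b :: real
  assumes "0 < r" and "r / 2 < x" and "x \<le> r"
  shows "x powr b \<le> 2 powr \<bar>b\<bar> * r powr b" and "2 powr (- \<bar>b\<bar>) * r powr b \<le> x powr b"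
proof -
  define t where "t = x / r"
  have t: "1/2 < t" "t \<le> 1" using assms by (auto simp: t_def field_simps)
  have x: "x = t * r" using assms by (simp add: t_def)
  have "t powr b \<le> 2 powr \<bar>b\<bar> \<and> 2 powr (- \<bar>b\<bar>) \<le> t powr b"
  proof (cases "0 \<le> b")
    case True
    have "t powr b \<le> 1" using powr_mono2[of b t 1] t True by simp
    moreover have "1 \<le> 2 powr \<bar>b\<bar>" by (rule ge_one_powr_ge_zero) auto
    moreover have "(1/2) powr b \<le> t powr b" using t True by (intro powr_mono2) auto
    moreover have "(1/2::real) powr b = 2 powr (- \<bar>b\<bar>)"
      using True by (simp add: powr_minus_divide powr_divide)
    ultimately show ?thesis by simp
  next
    case False
    have "t powr b \<le> (1/2) powr b" using t False by (intro powr_mono2') auto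
    moreover have "1 \<le> t powr b" using powr_mono2'[of b t 1] t False by simp
    moreover have "2 powr (- \<bar>b\<bar>) \<le> (1::real)" using powr_mono[of "- \<bar>b\<bar>" 0 "2::real"] by simp
    moreover have "(1/2::real) powr b = 2 powr \<bar>b\<bar>"
      using False by (simp add: powr_minus_divide powr_divide)
    ultimately show ?thesis by simp
  qed
  then show "x powr b \<le> 2 powr \<bar>b\<bar> * r powr b" "2 powr (- \<bar>b\<bar>) * r powr b \<le> x powr b"
    using assms t by (auto simp: x powr_mult intro: mult_right_mono)
qed

lemma two_powr_less_one_iff: "(2::real) powr x < 1 \<longleftrightarrow> x < 0"
  using powr_less_cancel_iff[of "2::real" x 0] by simp

section \<open>Dyadic shells\<close>

definition dyadic_shell :: "int^'n \<Rightarrow> (complex^'n) set" where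
  "dyadic_shell m = {z. \<forall>k. 2 powr (- real_of_int (m $ k) - 1) < cmod (z $ k)
                           \<and> cmod (z $ k) \<le> 2 powr (- real_of_int (m $ k))}"

definition dyadic_box :: "int^'n \<Rightarrow> (complex^'n) set" where
  "dyadic_box m = cbox (\<chi> k. Complex (5/8 * 2 powr (- real_of_int (m $ k))) 0)
                       (\<chi> k. Complex (3/4 * 2 powr (- real_of_int (m $ k))) (2 powr (- real_of_int (m $ k)) / 8))"

lemma dyadic_shell_borel [measurable]: "dyadic_shell m \<in> sets borel"
proof -
  have "dyadic_shell m = (\<Inter>k. {z. 2 powr (- real_of_int (m $ k) - 1) < cmod (z $ k)}
                            \<inter> {z. cmod (z $ k) \<le> 2 powr (- real_of_int (m $ k))})"
    unfolding dyadic_shell_def by auto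
  also have "\<dots> \<in> sets borel" by measurable
  finally show ?thesis .
qed

lemma dyadic_box_borel [measurable]: "dyadic_box m \<in> sets borel"
  by (simp add: dyadic_box_def)

lemma disjoint_family_dyadic_shell: "disjoint_family dyadic_shell"
  unfolding disjoint_family_on_def
proof (intro ballI impI equals0I)
  fix m m' :: "int^'n" and z
  assume "m \<noteq> m'" and z: "z \<in> dyadic_shell m \<inter> dyadic_shell m'"
  from \<open>m \<noteq> m'\<close> obtain k where "m $ k \<noteq> m' $ k" by (auto simp: vec_eq_iff)
  have z: "2 powr (- real_of_int (m $ k) - 1) < cmod (z $ k)" "cmod (z $ k) \<le> 2 powr (- real_of_int (m $ k))"
      "2 powr (- real_of_int (m' $ k) - 1) < cmod (z $ k)" "cmod (z $ k) \<le> 2 powr (- real_of_int (m' $ k))"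
    using z by (auto simp: dyadic_shell_def)
  from \<open>m $ k \<noteq> m' $ k\<close> consider "m $ k + 1 \<le> m' $ k" | "m' $ k + 1 \<le> m $ k" by linarith
  then show False
  proof cases
    case 1
    then have "2 powr (- real_of_int (m' $ k)) \<le> 2 powr (- real_of_int (m $ k) - 1)" by simp
    with z show False by linarith
  next
    case 2
    then have "2 powr (- real_of_int (m $ k)) \<le> 2 powr (- real_of_int (m' $ k) - 1)" by simp
    with z show False by linarith
  qed
qed

lemma mem_dyadic_shell_floor_log:
  assumes "\<forall>k. z $ k \<noteq> 0"
  shows "z \<in> dyadic_shell (\<chi> k. \<lfloor>- log 2 (cmod (z $ k))\<rfloor>)"
  unfolding dyadic_shell_def
proof (intro CollectI allI conjI)
  fix k
  define x where "x = - log 2 (cmod (z $ k))"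
  have z: "cmod (z $ k) = 2 powr (- x)" using assms by (simp add: x_def)
  have floor: "(\<chi> k. \<lfloor>- log 2 (cmod (z $ k))\<rfloor>) $ k = \<lfloor>x\<rfloor>" by (simp add: x_def)
  show "2 powr (- real_of_int ((\<chi> k. \<lfloor>- log 2 (cmod (z $ k))\<rfloor>) $ k) - 1) < cmod (z $ k)"
    unfolding z floor by (intro powr_less_mono) linarith+
  show "cmod (z $ k) \<le> 2 powr (- real_of_int ((\<chi> k. \<lfloor>- log 2 (cmod (z $ k))\<rfloor>) $ k))"
    unfolding z floor by (intro powr_mono) linarith+
qed

lemma AE_mem_dyadic_shells: "AE z in lborel. z \<in> (\<Union>m. dyadic_shell m)"
  using AE_vec_nth_nonzero by eventually_elim (meson UNIV_I UN_I mem_dyadic_shell_floor_log)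

lemma dyadic_box_subset_shell: "dyadic_box m \<subseteq> dyadic_shell m"
proof
  fix z assume z: "z \<in> dyadic_box m"
  show "z \<in> dyadic_shell m" unfolding dyadic_shell_def
  proof (intro CollectI allI conjI)
    fix k
    define r where "r = 2 powr (- real_of_int (m $ k))"
    have "0 < r" by (simp add: r_def)
    have re: "5/8 * r \<le> Re (z $ k)" "Re (z $ k) \<le> 3/4 * r" and im: "0 \<le> Im (z $ k)" "Im (z $ k) \<le> r / 8"
      using z by (simp_all add: dyadic_box_def mem_cbox_complex_vec r_def)
    have "2 powr (- real_of_int (m $ k) - 1) = r / 2" by (simp add: r_def powr_diff)
    also have "\<dots> < Re (z $ k)" using re \<open>0 < r\<close> by simp
    also have "\<dots> \<le> cmod (z $ k)" by (rule complex_Re_le_cmod)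
    finally show "2 powr (- real_of_int (m $ k) - 1) < cmod (z $ k)" .
    have "(cmod (z $ k))\<^sup>2 = (Re (z $ k))\<^sup>2 + (Im (z $ k))\<^sup>2" by (rule cmod_power2)
    also have "\<dots> \<le> (3/4 * r)\<^sup>2 + (r / 8)\<^sup>2"
      using re im \<open>0 < r\<close> by (intro add_mono power_mono) auto
    also have "\<dots> \<le> r\<^sup>2" by (simp add: power2_eq_square field_simps)
    finally have "(cmod (z $ k))\<^sup>2 \<le> r\<^sup>2" .
    then have "cmod (z $ k) \<le> r" by (rule power2_le_imp_le) (use \<open>0 < r\<close> in linarith)
    then show "cmod (z $ k) \<le> 2 powr (- real_of_int (m $ k))" by (simp add: r_def)
  qed
qed

lemma dyadic_shell_nonzero:
  assumes "z \<in> dyadic_shell m"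
  shows "z $ k \<noteq> 0"
proof -
  have "2 powr (- real_of_int (m $ k) - 1) < cmod (z $ k)"
    using assms by (simp add: dyadic_shell_def)
  then have "0 < cmod (z $ k)" by (rule le_less_trans[OF powr_ge_zero])
  then show ?thesis by simp
qed

lemma prod_norm_powr_dyadic_shell:
  fixes e :: "'n::finite \<Rightarrow> real"
  assumes "z \<in> dyadic_shell m"
  shows "(\<Prod>k\<in>UNIV. cmod (z $ k) powr e k) \<le> 2 powr (\<Sum>k\<in>UNIV. \<bar>e k\<bar> - e k * m $ k)"
    and "2 powr (\<Sum>k\<in>UNIV. - \<bar>e k\<bar> - e k * m $ k) \<le> (\<Prod>k\<in>UNIV. cmod (z $ k) powr e k)"
proof -
  have r: "0 < 2 powr (- real_of_int (m $ k))" "2 powr (- real_of_int (m $ k)) / 2 < cmod (z $ k)"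
      "cmod (z $ k) \<le> 2 powr (- real_of_int (m $ k))" for k
    using assms by (auto simp: dyadic_shell_def powr_diff)
  have split: "2 powr (c - e k * m $ k) = 2 powr c * (2 powr (- real_of_int (m $ k))) powr e k" for c k
    by (simp add: powr_powr powr_add[symmetric] mult.commute)
  have "2 powr (\<Sum>k\<in>UNIV. \<bar>e k\<bar> - e k * m $ k)
      = (\<Prod>k\<in>UNIV. 2 powr \<bar>e k\<bar> * (2 powr (- real_of_int (m $ k))) powr e k)"
    by (simp add: powr_sum split)
  then show "(\<Prod>k\<in>UNIV. cmod (z $ k) powr e k) \<le> 2 powr (\<Sum>k\<in>UNIV. \<bar>e k\<bar> - e k * m $ k)"
    using powr_bounds_half_interval(1)[OF r] by (simp add: prod_mono)
  have "2 powr (\<Sum>k\<in>UNIV. - \<bar>e k\<bar> - e k * m $ k)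
      = (\<Prod>k\<in>UNIV. 2 powr (- \<bar>e k\<bar>) * (2 powr (- real_of_int (m $ k))) powr e k)"
    by (simp add: powr_sum split)
  then show "2 powr (\<Sum>k\<in>UNIV. - \<bar>e k\<bar> - e k * m $ k) \<le> (\<Prod>k\<in>UNIV. cmod (z $ k) powr e k)"
    using powr_bounds_half_interval(2)[OF r] by (simp add: prod_mono)
qed

lemma dyadic_shell_meets_polyhedron:
  assumes "z \<in> dyadic_shell m" and "z \<in> monomial_polyhedron B"
  shows "- (\<Sum>k\<in>UNIV. \<bar>B $ j $ k\<bar>) < (B *v m) $ j"
proof -
  have "(\<Prod>k\<in>UNIV. cmod (z $ k) powr (B $ j $ k)) < 1"
    using assms dyadic_shell_nonzero mem_monomial_polyhedron_iff by blast
  then have "2 powr (\<Sum>k\<in>UNIV. - \<bar>real_of_int (B $ j $ k)\<bar> - real_of_int (B $ j $ k) * m $ k) < 1"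
    using prod_norm_powr_dyadic_shell(2)[OF assms(1), of "\<lambda>k. real_of_int (B $ j $ k)"] by linarith
  moreover have "(\<Sum>k\<in>UNIV. - \<bar>real_of_int (B $ j $ k)\<bar> - real_of_int (B $ j $ k) * m $ k)
      = real_of_int (- (\<Sum>k\<in>UNIV. \<bar>B $ j $ k\<bar>) - (B *v m) $ j)"
    by (simp add: matrix_vector_mult_def sum_subtractf sum_negf)
  ultimately show ?thesis by (simp only: two_powr_less_one_iff of_int_less_0_iff)
qed

lemma dyadic_shell_subset_polyhedron:
  assumes "\<forall>j. (\<Sum>k\<in>UNIV. \<bar>B $ j $ k\<bar>) < (B *v m) $ j"
  shows "dyadic_shell m \<subseteq> monomial_polyhedron B"
proof
  fix z assume z: "z \<in> dyadic_shell m"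
  have "(\<Prod>k\<in>UNIV. cmod (z $ k) powr (B $ j $ k)) < 1" for j
  proof -
    have "(\<Sum>k\<in>UNIV. \<bar>real_of_int (B $ j $ k)\<bar> - real_of_int (B $ j $ k) * m $ k)
        = real_of_int ((\<Sum>k\<in>UNIV. \<bar>B $ j $ k\<bar>) - (B *v m) $ j)"
      by (simp add: matrix_vector_mult_def sum_subtractf)
    moreover have "(\<Sum>k\<in>UNIV. \<bar>B $ j $ k\<bar>) - (B *v m) $ j < 0" using assms by simp
    ultimately have "2 powr (\<Sum>k\<in>UNIV. \<bar>real_of_int (B $ j $ k)\<bar> - real_of_int (B $ j $ k) * m $ k) < 1"
      by (simp only: two_powr_less_one_iff of_int_less_0_iff)
    then show ?thesis
      using prod_norm_powr_dyadic_shell(1)[OF z, of "\<lambda>k. real_of_int (B $ j $ k)"] by linarith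
  qed
  then show "z \<in> monomial_polyhedron B"
    using z dyadic_shell_nonzero mem_monomial_polyhedron_iff by blast
qed

lemma emeasure_dyadic_shell_le:
  "emeasure lborel (dyadic_shell m) \<le> ennreal (2 powr (\<Sum>k\<in>UNIV. 2 - 2 * m $ k))"
proof -
  define r where "r k = 2 powr (- real_of_int (m $ k))" for k
  have sub: "dyadic_shell m \<subseteq> cbox (\<chi> k. Complex (- r k) (- r k)) (\<chi> k. Complex (r k) (r k))"
  proof
    fix z assume z: "z \<in> dyadic_shell m"
    have "cmod (z $ k) \<le> r k" for k using z by (simp add: dyadic_shell_def r_def)
    then have "\<bar>Re (z $ k)\<bar> \<le> r k" "\<bar>Im (z $ k)\<bar> \<le> r k" for k
      using abs_Re_le_cmod[of "z $ k"] abs_Im_le_cmod[of "z $ k"] by (simp_all add: order_trans)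
    then show "z \<in> cbox (\<chi> k. Complex (- r k) (- r k)) (\<chi> k. Complex (r k) (r k))"
      unfolding mem_cbox_complex_vec by (force simp: abs_le_iff minus_le_iff)
  qed
  have "emeasure lborel (dyadic_shell m)
      \<le> emeasure lborel (cbox (\<chi> k. Complex (- r k) (- r k)) (\<chi> k. Complex (r k) (r k)))"
    by (rule emeasure_mono[OF sub]) simp
  also have "\<dots> = ennreal (\<Prod>k\<in>UNIV. (2 * r k) * (2 * r k))"
    by (subst emeasure_cbox_complex_vec) (simp_all add: r_def)
  also have "(\<Prod>k\<in>UNIV. (2 * r k) * (2 * r k)) = 2 powr (\<Sum>k\<in>UNIV. 2 - 2 * m $ k)"
  proof -
    have "(2 * r k) * (2 * r k) = 2 powr 2 * 2 powr (- real_of_int (m $ k)) * 2 powr (- real_of_int (m $ k))"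
      for k by (simp add: r_def powr_numeral)
    also have "\<dots> k = 2 powr (2 - 2 * m $ k)" for k
      unfolding powr_add[symmetric] by (rule arg_cong[of _ _ "(powr) 2"]) simp
    finally have "(2 * r k) * (2 * r k) = 2 powr (2 - 2 * m $ k)" for k .
    then show ?thesis by (simp add: powr_sum)
  qed
  finally show ?thesis .
qed

lemma emeasure_dyadic_box:
  "emeasure lborel (dyadic_box m) = ennreal (2 powr (\<Sum>k\<in>UNIV. - 6 - 2 * m $ k))"
proof -
  have "emeasure lborel (dyadic_box m)
      = ennreal (\<Prod>k\<in>UNIV. (2 powr (- real_of_int (m $ k)) / 8) * (2 powr (- real_of_int (m $ k)) / 8))"
    unfolding dyadic_box_def by (subst emeasure_cbox_complex_vec) (auto simp: algebra_simps)
  also have "(\<Prod>k\<in>UNIV. (2 powr (- real_of_int (m $ k)) / 8) * (2 powr (- real_of_int (m $ k)) / 8))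
      = 2 powr (\<Sum>k\<in>UNIV. - 6 - 2 * m $ k)"
  proof -
    have "(2 powr (- real_of_int (m $ k)) / 8) * (2 powr (- real_of_int (m $ k)) / 8)
        = 2 powr (- 6) * 2 powr (- real_of_int (m $ k)) * 2 powr (- real_of_int (m $ k))" for k
      by (simp add: powr_minus_divide powr_numeral)
    also have "\<dots> k = 2 powr (- 6 - 2 * m $ k)" for k
      unfolding powr_add[symmetric] by (rule arg_cong[of _ _ "(powr) 2"]) simp
    finally have "(2 powr (- real_of_int (m $ k)) / 8) * (2 powr (- real_of_int (m $ k)) / 8)
        = 2 powr (- 6 - 2 * m $ k)" for k .
    then show ?thesis by (simp add: powr_sum)
  qed
  finally show ?thesis .
qed

section \<open>Square integrability of monomials\<close>

lemma norm_monomial_sq_dyadic_shell: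
  assumes "z \<in> dyadic_shell m"
  shows "(cmod (monomial \<beta> z))\<^sup>2 \<le> 2 powr (\<Sum>k\<in>UNIV. 2 * \<bar>\<beta> $ k\<bar> - 2 * \<beta> $ k * m $ k)"
    and "2 powr (\<Sum>k\<in>UNIV. - 2 * \<bar>\<beta> $ k\<bar> - 2 * \<beta> $ k * m $ k) \<le> (cmod (monomial \<beta> z))\<^sup>2"
  using prod_norm_powr_dyadic_shell[OF assms, of "\<lambda>k. 2 * real_of_int (\<beta> $ k)"]
    norm_monomial_sq[of z \<beta>] dyadic_shell_nonzero[OF assms]
  by (simp_all add: abs_mult)

lemma nn_integral_monomial_sq_dyadic_shell_le:
  "(\<integral>\<^sup>+z\<in>dyadic_shell m. ennreal ((cmod (monomial \<beta> z))\<^sup>2) * indicator (monomial_polyhedron B) z \<partial>lborel)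
   \<le> ennreal (2 powr (\<Sum>k\<in>UNIV. 2 * \<bar>\<beta> $ k\<bar> + 2))
       * ennreal (2 powr (- 2 * real_of_int (\<Sum>k\<in>UNIV. (\<beta> $ k + 1) * m $ k)))
       * indicator {m. \<forall>j. - (\<Sum>k\<in>UNIV. \<bar>B $ j $ k\<bar>) < (B *v m) $ j} m"
proof (cases "\<forall>j. - (\<Sum>k\<in>UNIV. \<bar>B $ j $ k\<bar>) < (B *v m) $ j")
  case True
  define M where "M = 2 powr (\<Sum>k\<in>UNIV. 2 * \<bar>\<beta> $ k\<bar> - 2 * \<beta> $ k * m $ k)"
  have "(\<integral>\<^sup>+z\<in>dyadic_shell m. ennreal ((cmod (monomial \<beta> z))\<^sup>2) * indicator (monomial_polyhedron B) z \<partial>lborel)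
      \<le> (\<integral>\<^sup>+z. ennreal M * indicator (dyadic_shell m) z \<partial>lborel)"
    using norm_monomial_sq_dyadic_shell(1)[of _ m \<beta>]
    by (intro nn_integral_mono) (auto simp: M_def split: split_indicator intro: ennreal_leI)
  also have "\<dots> = ennreal M * emeasure lborel (dyadic_shell m)"
    by (rule nn_integral_cmult_indicator) simp
  also have "\<dots> \<le> ennreal M * ennreal (2 powr (\<Sum>k\<in>UNIV. 2 - 2 * m $ k))"
    by (intro mult_left_mono emeasure_dyadic_shell_le) simp
  also have "\<dots> = ennreal (2 powr (\<Sum>k\<in>UNIV. 2 * \<bar>\<beta> $ k\<bar> + 2))
       * ennreal (2 powr (- 2 * real_of_int (\<Sum>k\<in>UNIV. (\<beta> $ k + 1) * m $ k)))"
  proof -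
    have "M * 2 powr (\<Sum>k\<in>UNIV. 2 - 2 * m $ k)
        = 2 powr (\<Sum>k\<in>UNIV. 2 * \<bar>\<beta> $ k\<bar> + 2) * 2 powr (- 2 * real_of_int (\<Sum>k\<in>UNIV. (\<beta> $ k + 1) * m $ k))"
      unfolding M_def powr_add[symmetric]
      by (rule arg_cong[of _ _ "(powr) 2"]) (simp add: sum.distrib sum_subtractf sum_negf sum_distrib_left algebra_simps)
    then show ?thesis by (simp add: M_def flip: ennreal_mult)
  qed
  finally show ?thesis using True by simp
next
  case False
  then have "z \<notin> dyadic_shell m \<inter> monomial_polyhedron B" for z
    using dyadic_shell_meets_polyhedron by blast
  then have "(\<integral>\<^sup>+z\<in>dyadic_shell m. ennreal ((cmod (monomial \<beta> z))\<^sup>2) * indicator (monomial_polyhedron B) z \<partial>lborel) = 0"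
    by (subst nn_integral_0_iff_AE) (auto split: split_indicator)
  then show ?thesis by simp
qed

lemma nn_integral_monomial_sq_dyadic_box_ge:
  assumes "\<forall>j. (\<Sum>k\<in>UNIV. \<bar>B $ j $ k\<bar>) < (B *v m) $ j"
  shows "ennreal (2 powr (\<Sum>k\<in>UNIV. - 2 * \<bar>\<beta> $ k\<bar> - 6))
           * ennreal (2 powr (- 2 * real_of_int (\<Sum>k\<in>UNIV. (\<beta> $ k + 1) * m $ k)))
       \<le> (\<integral>\<^sup>+z\<in>dyadic_box m. ennreal ((cmod (monomial \<beta> z))\<^sup>2) * indicator (monomial_polyhedron B) z \<partial>lborel)"
proof -
  define L where "L = 2 powr (\<Sum>k\<in>UNIV. - 2 * \<bar>\<beta> $ k\<bar> - 2 * \<beta> $ k * m $ k)"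
  have "ennreal (2 powr (\<Sum>k\<in>UNIV. - 2 * \<bar>\<beta> $ k\<bar> - 6))
           * ennreal (2 powr (- 2 * real_of_int (\<Sum>k\<in>UNIV. (\<beta> $ k + 1) * m $ k)))
      = ennreal L * ennreal (2 powr (\<Sum>k\<in>UNIV. - 6 - 2 * m $ k))"
  proof -
    have "2 powr (\<Sum>k\<in>UNIV. - 2 * \<bar>\<beta> $ k\<bar> - 6) * 2 powr (- 2 * real_of_int (\<Sum>k\<in>UNIV. (\<beta> $ k + 1) * m $ k))
        = L * 2 powr (\<Sum>k\<in>UNIV. - 6 - 2 * m $ k)"
      unfolding L_def powr_add[symmetric]
      by (rule arg_cong[of _ _ "(powr) 2"]) (simp add: sum.distrib sum_subtractf sum_negf sum_distrib_left algebra_simps)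
    then show ?thesis by (simp add: L_def flip: ennreal_mult)
  qed
  also have "\<dots> = (\<integral>\<^sup>+z. ennreal L * indicator (dyadic_box m) z \<partial>lborel)"
    by (simp add: nn_integral_cmult_indicator emeasure_dyadic_box)
  also have "\<dots> \<le> (\<integral>\<^sup>+z\<in>dyadic_box m. ennreal ((cmod (monomial \<beta> z))\<^sup>2) * indicator (monomial_polyhedron B) z \<partial>lborel)"
  proof (intro nn_integral_mono)
    fix z
    show "ennreal L * indicator (dyadic_box m) z
        \<le> ennreal ((cmod (monomial \<beta> z))\<^sup>2) * indicator (monomial_polyhedron B) z * indicator (dyadic_box m) z"
    proof (cases "z \<in> dyadic_box m")
      case True
      then have "z \<in> dyadic_shell m" using dyadic_box_subset_shell by blast
      then have "z \<in> monomial_polyhedron B" and "L \<le> (cmod (monomial \<beta> z))\<^sup>2"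
        using dyadic_shell_subset_polyhedron[OF assms] norm_monomial_sq_dyadic_shell(2)
        by (auto simp: L_def)
      then show ?thesis using True by (simp add: ennreal_leI)
    qed simp
  qed
  finally show ?thesis .
qed

lemma nn_integral_monomial_sq_le:
  "(\<integral>\<^sup>+z\<in>monomial_polyhedron B. ennreal ((cmod (monomial \<beta> z))\<^sup>2) \<partial>lborel)
   \<le> ennreal (2 powr (\<Sum>k\<in>UNIV. 2 * \<bar>\<beta> $ k\<bar> + 2))
       * (\<integral>\<^sup>+m\<in>{m. \<forall>j. - (\<Sum>k\<in>UNIV. \<bar>B $ j $ k\<bar>) < (B *v m) $ j}.
            ennreal (2 powr (- 2 * real_of_int (\<Sum>k\<in>UNIV. (\<beta> $ k + 1) * m $ k))) \<partial>count_space UNIV)"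
proof -
  define f where "f z = ennreal ((cmod (monomial \<beta> z))\<^sup>2) * indicator (monomial_polyhedron B) z" for z
  have [measurable]: "f \<in> borel_measurable lborel" unfolding f_def by measurable
  have "(\<integral>\<^sup>+z. f z \<partial>lborel) = (\<integral>\<^sup>+z\<in>(\<Union>m. dyadic_shell m). f z \<partial>lborel)"
    using AE_mem_dyadic_shells by (intro nn_integral_cong_AE) (auto elim!: eventually_mono)
  also have "\<dots> = (\<integral>\<^sup>+m. (\<integral>\<^sup>+z\<in>dyadic_shell m. f z \<partial>lborel) \<partial>count_space UNIV)"
    by (rule nn_integral_disjoint_family_count_space[symmetric]) (simp_all add: disjoint_family_dyadic_shell)
  also have "\<dots> \<le> (\<integral>\<^sup>+m. ennreal (2 powr (\<Sum>k\<in>UNIV. 2 * \<bar>\<beta> $ k\<bar> + 2))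
       * (ennreal (2 powr (- 2 * real_of_int (\<Sum>k\<in>UNIV. (\<beta> $ k + 1) * m $ k)))
       * indicator {m. \<forall>j. - (\<Sum>k\<in>UNIV. \<bar>B $ j $ k\<bar>) < (B *v m) $ j} m) \<partial>count_space UNIV)"
    unfolding f_def mult.assoc[symmetric]
    by (intro nn_integral_mono nn_integral_monomial_sq_dyadic_shell_le)
  finally show ?thesis by (simp add: f_def nn_integral_cmult)
qed

lemma nn_integral_monomial_sq_ge:
  "ennreal (2 powr (\<Sum>k\<in>UNIV. - 2 * \<bar>\<beta> $ k\<bar> - 6))
       * (\<integral>\<^sup>+m\<in>{m. \<forall>j. (\<Sum>k\<in>UNIV. \<bar>B $ j $ k\<bar>) < (B *v m) $ j}.
            ennreal (2 powr (- 2 * real_of_int (\<Sum>k\<in>UNIV. (\<beta> $ k + 1) * m $ k))) \<partial>count_space UNIV)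
   \<le> (\<integral>\<^sup>+z\<in>monomial_polyhedron B. ennreal ((cmod (monomial \<beta> z))\<^sup>2) \<partial>lborel)"
proof -
  define f where "f z = ennreal ((cmod (monomial \<beta> z))\<^sup>2) * indicator (monomial_polyhedron B) z" for z
  define R where "R = {m. \<forall>j. (\<Sum>k\<in>UNIV. \<bar>B $ j $ k\<bar>) < (B *v m) $ j}"
  define P where "P m = (if m \<in> R then dyadic_box m else {})" for m
  have [measurable]: "f \<in> borel_measurable lborel" unfolding f_def by measurable
  have "disjoint_family P"
    by (rule disjoint_family_subset[OF disjoint_family_dyadic_shell])
      (use dyadic_box_subset_shell in \<open>auto simp: P_def\<close>)
  have "ennreal (2 powr (\<Sum>k\<in>UNIV. - 2 * \<bar>\<beta> $ k\<bar> - 6))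
       * (\<integral>\<^sup>+m\<in>R. ennreal (2 powr (- 2 * real_of_int (\<Sum>k\<in>UNIV. (\<beta> $ k + 1) * m $ k))) \<partial>count_space UNIV)
      = (\<integral>\<^sup>+m. ennreal (2 powr (\<Sum>k\<in>UNIV. - 2 * \<bar>\<beta> $ k\<bar> - 6))
          * ennreal (2 powr (- 2 * real_of_int (\<Sum>k\<in>UNIV. (\<beta> $ k + 1) * m $ k))) * indicator R m \<partial>count_space UNIV)"
    by (simp add: nn_integral_cmult mult.assoc)
  also have "\<dots> \<le> (\<integral>\<^sup>+m. (\<integral>\<^sup>+z\<in>P m. f z \<partial>lborel) \<partial>count_space UNIV)"
    using nn_integral_monomial_sq_dyadic_box_ge
    by (intro nn_integral_mono) (auto simp: P_def R_def f_def split: split_indicator)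
  also have "\<dots> = (\<integral>\<^sup>+z\<in>(\<Union>m. P m). f z \<partial>lborel)"
    using \<open>disjoint_family P\<close> by (rule nn_integral_disjoint_family_count_space) (simp_all add: P_def)
  also have "\<dots> \<le> (\<integral>\<^sup>+z. f z \<partial>lborel)"
    by (intro nn_integral_mono) (simp split: split_indicator)
  finally show ?thesis by (simp add: R_def f_def)
qed

lemma mem_S2_iff:
  assumes "U \<in> sets borel"
  shows "\<beta> \<in> S2 U \<longleftrightarrow> (\<integral>\<^sup>+z\<in>U. ennreal ((cmod (monomial \<beta> z))\<^sup>2) \<partial>lborel) < \<infinity>"
proof -
  have "monomial \<beta> \<in> borel_measurable (lebesgue_on U)"
    by (intro measurable_restrict_space1 measurable_completion) simp
  moreover have "U \<inter> space (completion lborel) \<in> sets (completion lborel)" using assms by simp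
  ultimately show ?thesis
    by (simp add: S2_def nn_integral_restrict_space nn_integral_completion)
qed

theorem S2_monomial_polyhedron_iff:
  fixes B :: "int^'n^'n"
  assumes "det B > 0"
  shows "\<beta> \<in> S2 (monomial_polyhedron B) \<longleftrightarrow> (\<forall>j. 0 < shifted_col \<beta> (adjugate B) j)"
proof -
  let ?I = "\<integral>\<^sup>+z\<in>monomial_polyhedron B. ennreal ((cmod (monomial \<beta> z))\<^sup>2) \<partial>lborel"
  have "?I < \<infinity> \<longleftrightarrow> (\<forall>j. 0 < ((\<beta> + 1) v* adjugate B) $ j)"
  proof
    assume "\<forall>j. 0 < ((\<beta> + 1) v* adjugate B) $ j"
    from lattice_sum_finite[OF assms this, of "\<lambda>j. - (\<Sum>k\<in>UNIV. \<bar>B $ j $ k\<bar>)"]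
    show "?I < \<infinity>"
      using nn_integral_monomial_sq_le[where B=B and \<beta>=\<beta>]
      by (auto simp: ennreal_mult_less_top intro: le_less_trans)
  next
    assume "?I < \<infinity>"
    show "\<forall>j. 0 < ((\<beta> + 1) v* adjugate B) $ j"
    proof (rule ccontr)
      assume "\<not> (\<forall>j. 0 < ((\<beta> + 1) v* adjugate B) $ j)"
      then obtain j where "((\<beta> + 1) v* adjugate B) $ j \<le> 0" by (auto simp: not_less)
      from lattice_sum_infinite[OF assms this, of "\<lambda>j. \<Sum>k\<in>UNIV. \<bar>B $ j $ k\<bar>"]
      have "?I = \<infinity>"
        using nn_integral_monomial_sq_ge[where B=B and \<beta>=\<beta>] by (simp add: ennreal_mult_top top_unique)
      with \<open>?I < \<infinity>\<close> show False by simp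
    qed
  qed
  then show ?thesis by (simp add: mem_S2_iff shifted_col_eq)
qed

theorem proposition5p6:
  fixes B :: "int^'n^'n"
  assumes "bounded (monomial_polyhedron B)"
    and "det B > 0"
    and "\<forall>i j. matrix_inv (real_mat B) $ i $ j \<ge> 0"
  shows "(\<forall>\<beta>. \<beta> \<in> S2 (monomial_polyhedron B) \<longleftrightarrow>
              (\<forall>j. shifted_col \<beta> (adjugate B) j \<ge> col_gcd (adjugate B) j))
       \<and> (\<forall>j. \<exists>\<beta>. shifted_col \<beta> (adjugate B) j = col_gcd (adjugate B) j
                 \<and> \<beta> \<in> S2 (monomial_polyhedron B))"
proof -
  have gcd_pos: "0 < col_gcd (adjugate B) j" for j
    using assms(2) by (intro col_gcd_adjugate_pos) simp
  have "\<beta> \<in> S2 (monomial_polyhedron B) \<longleftrightarrow> (\<forall>j. shifted_col \<beta> (adjugate B) j \<ge> col_gcd (adjugate B) j)"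
    for \<beta>
    using S2_monomial_polyhedron_iff[OF assms(2)] col_gcd_le_shifted_col_iff[OF gcd_pos] by simp
  moreover have "\<exists>\<beta>. shifted_col \<beta> (adjugate B) j = col_gcd (adjugate B) j
                 \<and> \<beta> \<in> S2 (monomial_polyhedron B)" for j
    using exists_shifted_col_eq_col_gcd[OF assms(2), of j] S2_monomial_polyhedron_iff[OF assms(2)]
    by blast
  ultimately show ?thesis by blast
qed

end
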